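(* Let $u:(0,\infty)\to\mathbb{R}$ be strictly concave and continuously differentiable, and let $b>0$. Let $\hat u$ be the modified utility of $u$ with budget $b$ (defined in the context). Then (i) $\hat u$ is continuously differentiable on $(0,\infty)$; (ii) $\hat u$ is strictly concave on $(0,\infty)$; (iii) for all $\lambda>0$, $$\arg\max_{x>0}\ \hat u(x)-\lambda x=\max\Big\{0,\ \min\Big\{(u')^{-1}(\lambda),\ \tfrac{b}{\lambda}\Big\}\Big\}.$$
   Context: Modified utility: let $0=\tilde x_0<\tilde x_1<\dots<\tilde x_k<\tilde x_{k+1}=\infty$, where $\tilde x_1,\dots,\tilde x_k$ are the (crossover) solutions $\tilde x>0$ of $u'(\tilde x)=b/\tilde x$. On each interval $(\tilde x_{j-1},\tilde x_j)$ either $u'(x)\le b/x$ throughout or $u'(x)>b/x$ throughout; define $\hat u(x)=u(x)+c_j$ on intervals of the first type and $\hat u(x)=b\log x+d_j$ on intervals of the second type, where the constants $c_j,d_j$ are chosen sequentially so that $\hat u$ is continuous at each crossover point, with $c_1=d_1=0$. *)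

theory Defs
  imports "HOL-Analysis.Analysis"
begin

definition strictly_concave_on :: "real set \<Rightarrow> (real \<Rightarrow> real) \<Rightarrow> bool" where
  "strictly_concave_on S f \<longleftrightarrow> convex S \<and>
     (\<forall>x\<in>S. \<forall>y\<in>S. x \<noteq> y \<longrightarrow> (\<forall>t. 0 < t \<and> t < 1 \<longrightarrow>
        f ((1 - t) * x + t * y) > (1 - t) * f x + t * f y))"

definition C1_on :: "real set \<Rightarrow> (real \<Rightarrow> real) \<Rightarrow> bool" where
  "C1_on S f \<longleftrightarrow> (\<forall>x\<in>S. f differentiable (at x)) \<and> continuous_on S (deriv f)"

definition crossovers :: "(real \<Rightarrow> real) \<Rightarrow> real \<Rightarrow> real set" where
  "crossovers u b = {x. 0 < x \<and> deriv u x = b / x}"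

text \<open>The sorted list of crossover points x_1 < ... < x_k (meaningful when finite).\<close>
definition cpts :: "(real \<Rightarrow> real) \<Rightarrow> real \<Rightarrow> real list" where
  "cpts u b = sorted_list_of_set (crossovers u b)"

text \<open>Interval number j (j = 0..k, i.e. the paper's interval j+1) is
  (lo j, hi j), where lo 0 = 0 and hi k = infinity.\<close>
definition ival_lo :: "(real \<Rightarrow> real) \<Rightarrow> real \<Rightarrow> nat \<Rightarrow> real" where
  "ival_lo u b j = (if j = 0 then 0 else cpts u b ! (j - 1))"

definition in_ival :: "(real \<Rightarrow> real) \<Rightarrow> real \<Rightarrow> nat \<Rightarrow> real \<Rightarrow> bool" where
  "in_ival u b j x \<longleftrightarrow> ival_lo u b j < x \<and>
      (j < length (cpts u b) \<longrightarrow> x < cpts u b ! j)"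

definition first_type :: "(real \<Rightarrow> real) \<Rightarrow> real \<Rightarrow> nat \<Rightarrow> bool" where
  "first_type u b j \<longleftrightarrow> (\<forall>x. in_ival u b j x \<longrightarrow> deriv u x \<le> b / x)"

definition base_fun :: "(real \<Rightarrow> real) \<Rightarrow> real \<Rightarrow> nat \<Rightarrow> real \<Rightarrow> real" where
  "base_fun u b j x = (if first_type u b j then u x else b * ln x)"

text \<open>The additive constants (c_j or d_j), chosen sequentially for continuity
  at the crossover points, with the constant on the first interval equal to 0.\<close>
fun offset :: "(real \<Rightarrow> real) \<Rightarrow> real \<Rightarrow> nat \<Rightarrow> real" where
  "offset u b 0 = 0"
| "offset u b (Suc j) = offset u b j + base_fun u b j (cpts u b ! j)
                         - base_fun u b (Suc j) (cpts u b ! j)"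

text \<open>The modified utility: for x > 0, x lies in interval j (closed on the left at
  crossover points) where j is the number of crossover points \<le> x.\<close>
definition modified_utility :: "(real \<Rightarrow> real) \<Rightarrow> real \<Rightarrow> real \<Rightarrow> real" where
  "modified_utility u b x =
     (let j = card {y \<in> crossovers u b. y \<le> x} in base_fun u b j x + offset u b j)"

definition deriv_inv :: "(real \<Rightarrow> real) \<Rightarrow> real \<Rightarrow> ereal" where
  "deriv_inv u lam =
     (if \<exists>x>0. deriv u x = lam then ereal (THE x. 0 < x \<and> deriv u x = lam)
      else if \<forall>x>0. deriv u x < lam then 0 else \<infinity>)"

end

theory Submission
  imports Defs
begin

text \<open>Between consecutive crossover points the continuous function u'(x) - b/x has no zero, hence
  constant sign, so there the modified utility is u or b ln x up to a constant and has derivative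
  min(u'(x), b/x). At a crossover point both adjacent pieces have derivative u'(x) = b/x, and the
  constants make them agree. So the modified utility has derivative min(u', b/x) everywhere, which
  is continuous and strictly decreasing because u' and b/x are; this gives (i) and (ii). For (iii),
  the derivative min(u'(x), b/x) - lam of the objective is strictly decreasing, so the objective is
  maximised exactly at its zero min((u')^-1(lam), b/lam) when that exists; otherwise u' < lam
  everywhere and the objective is strictly decreasing.\<close>

lemma strictly_concave_onD:
  assumes "strictly_concave_on S f" "x \<in> S" "y \<in> S" "x \<noteq> y" "0 < t" "t < 1"
  shows "f ((1 - t) * x + t * y) > (1 - t) * f x + t * f y"
  using assms unfolding strictly_concave_on_def by blast

lemma strictly_concave_on_imp_concave_on:
  assumes "strictly_concave_on S f"
  shows "concave_on S f"
proof (rule concave_on_linorderI)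
  fix t x y :: real
  assume "0 < t" "t < 1" "x \<in> S" "y \<in> S" "x < y"
  then show "(1 - t) * f x + t * f y \<le> f ((1 - t) *\<^sub>R x + t *\<^sub>R y)"
    using strictly_concave_onD[OF assms] by (simp add: less_imp_le)
qed (use assms in \<open>simp add: strictly_concave_on_def\<close>)

lemma strictly_concave_on_le_tangent:
  assumes "strictly_concave_on S f" "open S" "c \<in> S" "z \<in> S"
    and "(f has_real_derivative d) (at c)"
  shows "f z \<le> f c + d * (z - c)"
proof -
  have "convex_on S (\<lambda>x. - f x)"
    using strictly_concave_on_imp_concave_on[OF assms(1)] by (simp add: concave_on_def)
  moreover have "connected S"
    using assms(1) by (simp add: strictly_concave_on_def convex_connected)
  ultimately have "- d * (z - c) \<le> - f z - - f c"
    using assms(2-5)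
    by (intro convex_on_imp_above_tangent)
      (auto intro: has_field_derivative_at_within DERIV_minus simp: interior_open)
  then show ?thesis by simp
qed

lemma strictly_concave_on_deriv_strict_antimono:
  assumes conc: "strictly_concave_on S f" and "open S"
    and D: "\<And>x. x \<in> S \<Longrightarrow> (f has_real_derivative f' x) (at x)"
  shows "strict_antimono_on S f'"
proof (rule monotone_onI)
  fix x y assume x: "x \<in> S" and y: "y \<in> S" and "x < y"
  define m where "m = (x + y) / 2"
  have m: "m = (1 - 1/2) * x + (1/2) * y"
    by (simp add: m_def)
  have "convex S"
    using conc by (simp add: strictly_concave_on_def)
  from convexD[OF this x y, of "1/2" "1/2"] have "m \<in> S"
    by (simp add: m)
  have "f m > (1 - 1/2) * f x + (1/2) * f y"
    unfolding m by (rule strictly_concave_onD[OF conc x y]) (use \<open>x < y\<close> in auto)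
  then have mid: "2 * f m > f x + f y"
    by simp
  have "f m \<le> f x + f' x * (m - x)" "f m \<le> f y + f' y * (m - y)"
    using strictly_concave_on_le_tangent[OF conc \<open>open S\<close> _ \<open>m \<in> S\<close> D] x y by auto
  with mid have "0 < f' x * (m - x) + f' y * (m - y)"
    by linarith
  also have "\<dots> = (f' x - f' y) * ((y - x) / 2)"
    by (simp add: m_def field_simps)
  finally
  show "f' y < f' x"
    using \<open>x < y\<close> by (simp add: zero_less_mult_iff)
qed

lemma strictly_concave_onI_deriv:
  assumes "convex S" and D: "\<And>x. x \<in> S \<Longrightarrow> (f has_real_derivative f' x) (at x)"
    and mono: "strict_antimono_on S f'"
  shows "strictly_concave_on S f"
proof -
  have chord: "f ((1 - t) * x + t * y) > (1 - t) * f x + t * f y"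
    if "x \<in> S" "y \<in> S" "x < y" "0 < t" "t < 1" for x y t
  proof -
    define z where "z = (1 - t) * x + t * y"
    have zx: "z - x = t * (y - x)" and yz: "y - z = (1 - t) * (y - x)"
      by (simp_all add: z_def algebra_simps)
    have "x < z" "z < y"
      using zx yz that by (smt (verit) mult_pos_pos)+
    have seg: "{x..y} \<subseteq> S"
      using closed_segment_subset[of x S y] \<open>convex S\<close> that by (simp add: closed_segment_eq_real_ivl)
    have Dseg: "\<And>w. x \<le> w \<Longrightarrow> w \<le> y \<Longrightarrow> (f has_real_derivative f' w) (at w)"
      using D seg by auto
    have "\<exists>a. x < a \<and> a < z \<and> f z - f x = (z - x) * f' a"
      by (rule MVT2[OF \<open>x < z\<close>]) (use Dseg \<open>z < y\<close> in auto)
    then obtain a where a: "x < a" "a < z" "f z - f x = (z - x) * f' a"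
      by blast
    have "\<exists>c. z < c \<and> c < y \<and> f y - f z = (y - z) * f' c"
      by (rule MVT2[OF \<open>z < y\<close>]) (use Dseg \<open>x < z\<close> in auto)
    then obtain c where c: "z < c" "c < y" "f y - f z = (y - z) * f' c"
      by blast
    have "a \<in> S" "c \<in> S"
      using seg a(1,2) c(1,2) by auto
    then have "f' c < f' a"
      using monotone_onD[OF mono] a c by auto
    then have "t * (1 - t) * (y - x) * f' c < t * (1 - t) * (y - x) * f' a"
      using that by (intro mult_strict_left_mono) auto
    moreover have "t * (f y - f z) = t * (1 - t) * (y - x) * f' c"
      using c(3) yz by simp
    moreover have "(1 - t) * (f z - f x) = t * (1 - t) * (y - x) * f' a"
      using a(3) zx by simp
    ultimately have "t * (f y - f z) < (1 - t) * (f z - f x)"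
      by linarith
    then show ?thesis
      unfolding z_def[symmetric] by (simp add: algebra_simps)
  qed
  show ?thesis
    unfolding strictly_concave_on_def
  proof (intro conjI ballI impI allI)
    fix x y t :: real
    assume "x \<in> S" "y \<in> S" "x \<noteq> y" "0 < t \<and> t < 1"
    then consider "x < y" | "y < x" by linarith
    then show "f ((1 - t) * x + t * y) > (1 - t) * f x + t * f y"
    proof cases
      case 2
      with chord[of y x "1 - t"] \<open>x \<in> S\<close> \<open>y \<in> S\<close> \<open>0 < t \<and> t < 1\<close> show ?thesis
        by (simp add: algebra_simps)
    qed (use chord \<open>x \<in> S\<close> \<open>y \<in> S\<close> \<open>0 < t \<and> t < 1\<close> in auto)
  qed fact
qed

lemma continuous_on_convex_avoids_less:
  fixes g :: "real \<Rightarrow> real"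
  assumes "convex S" "continuous_on S g" "\<And>z. z \<in> S \<Longrightarrow> g z \<noteq> c"
    and "x \<in> S" "y \<in> S" "g x < c"
  shows "g y < c"
proof (rule ccontr)
  assume "\<not> g y < c"
  then have "c \<in> closed_segment (g x) (g y)"
    using \<open>g x < c\<close> by (simp add: closed_segment_eq_real_ivl)
  moreover have "closed_segment x y \<subseteq> S"
    using assms by (simp add: convex_contains_segment)
  ultimately obtain z where "z \<in> closed_segment x y" "g z = c"
    using IVT'_closed_segment_real continuous_on_subset[OF \<open>continuous_on S g\<close>] by blast
  with \<open>closed_segment x y \<subseteq> S\<close> assms(3) show False by blast
qed

lemma has_real_derivative_glue:
  fixes f g :: "real \<Rightarrow> real"
  assumes "(f has_real_derivative d) (at x)" "(g has_real_derivative d) (at x)" "f x = g x"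
  shows "((\<lambda>y. if y < x then f y else g y) has_real_derivative d) (at x)"
proof -
  have "((\<lambda>y. if y \<in> {..<x} then f y else g y) has_derivative
      (if x \<in> {..<x} then (\<lambda>_. (*) d) x else (\<lambda>_. (*) d) x)) (at x within ({..<x} \<union> {x..}))"
    by (rule has_derivative_If_within_closures)
      (use assms in \<open>auto simp: has_field_derivative_def intro: has_derivative_at_withinI\<close>)
  moreover have "{..<x} \<union> {x..} = (UNIV :: real set)" by auto
  ultimately show ?thesis
    by (simp add: has_field_derivative_def)
qed

lemma argmax_at_critical_point:
  fixes f :: "real \<Rightarrow> real"
  assumes "convex S" and D: "\<And>x. x \<in> S \<Longrightarrow> (f has_real_derivative f' x) (at x)"
    and mono: "strict_antimono_on S f'" and "m \<in> S" "f' m = 0"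
  shows "{x \<in> S. \<forall>y\<in>S. f y \<le> f x} = {m}"
proof -
  have cont: "continuous_on S f"
    by (rule DERIV_continuous_on) (use D in \<open>auto intro: has_field_derivative_at_within\<close>)
  have less: "f y < f m" if "y \<in> S" "y \<noteq> m" for y
  proof -
    have seg: "closed_segment y m \<subseteq> S"
      using closed_segment_subset \<open>convex S\<close> \<open>m \<in> S\<close> that by blast
    consider "y < m" | "m < y"
      using \<open>y \<noteq> m\<close> by (meson linorder_neqE)
    then show ?thesis
    proof cases
      case 1
      with seg have "{y..m} \<subseteq> S"
        by (simp add: closed_segment_eq_real_ivl)
      show ?thesis
      proof (rule DERIV_pos_imp_increasing_open[OF 1])
        fix z assume "y < z" "z < m"
        with \<open>{y..m} \<subseteq> S\<close> have "z \<in> S" by auto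
        with D monotone_onD[OF mono \<open>z \<in> S\<close> \<open>m \<in> S\<close> \<open>z < m\<close>] \<open>f' m = 0\<close>
        show "\<exists>d. (f has_real_derivative d) (at z) \<and> 0 < d"
          by (intro exI[of _ "f' z"]) simp
      qed (rule continuous_on_subset[OF cont \<open>{y..m} \<subseteq> S\<close>])
    next
      case 2
      with seg have "{m..y} \<subseteq> S"
        by (simp add: closed_segment_eq_real_ivl)
      show ?thesis
      proof (rule DERIV_neg_imp_decreasing_open[OF 2])
        fix z assume "m < z" "z < y"
        with \<open>{m..y} \<subseteq> S\<close> have "z \<in> S" by auto
        with D monotone_onD[OF mono \<open>m \<in> S\<close> \<open>z \<in> S\<close> \<open>m < z\<close>] \<open>f' m = 0\<close>
        show "\<exists>d. (f has_real_derivative d) (at z) \<and> d < 0"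
          by (intro exI[of _ "f' z"]) simp
      qed (rule continuous_on_subset[OF cont \<open>{m..y} \<subseteq> S\<close>])
    qed
  qed
  then show ?thesis
    using \<open>m \<in> S\<close> by (force intro: less_imp_le)
qed

lemma deriv_inv_cases:
  fixes u :: "real \<Rightarrow> real"
  assumes cont: "continuous_on {0<..} (deriv u)" and mono: "strict_antimono_on {0<..} (deriv u)"
  obtains (root) x where "x > 0" "deriv u x = lam" "deriv_inv u lam = ereal x"
    | (below) "\<And>x. x > 0 \<Longrightarrow> deriv u x < lam" "deriv_inv u lam = 0"
    | (above) "\<And>x. x > 0 \<Longrightarrow> deriv u x > lam" "deriv_inv u lam = \<infinity>"
proof (cases "\<exists>x>0. deriv u x = lam")
  case True
  then obtain x where x: "x > 0" "deriv u x = lam" by blast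
  have the_eq: "(THE x. 0 < x \<and> deriv u x = lam) = x"
  proof (rule the_equality)
    fix y assume "0 < y \<and> deriv u y = lam"
    with x show "y = x"
      using monotone_onD[OF mono, of x y] monotone_onD[OF mono, of y x]
      by (cases x y rule: linorder_cases) auto
  qed (use x in simp)
  show ?thesis
    by (intro root[of x]) (use True x the_eq in \<open>simp_all add: deriv_inv_def\<close>)
next
  case no_root: False
  then have avoid: "\<And>z. z \<in> {0<..} \<Longrightarrow> deriv u z \<noteq> lam" by auto
  show ?thesis
  proof (cases "\<forall>x>0. deriv u x < lam")
    case True
    show ?thesis
      by (intro below) (use True no_root in \<open>auto simp: deriv_inv_def\<close>)
  next
    case False
    then obtain y where y: "y > 0" "\<not> deriv u y < lam" by auto
    have above_lam: "deriv u x > lam" if "x > 0" for x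
    proof -
      have "\<not> deriv u x < lam"
        using continuous_on_convex_avoids_less[OF _ cont avoid, of x y] that y by auto
      with avoid that show ?thesis by force
    qed
    show ?thesis
      by (intro above) (use above_lam no_root False in \<open>auto simp: deriv_inv_def\<close>)
  qed
qed

definition modified_deriv :: "(real \<Rightarrow> real) \<Rightarrow> real \<Rightarrow> real \<Rightarrow> real" where
  "modified_deriv u b x = min (deriv u x) (b / x)"

context
  fixes u :: "real \<Rightarrow> real" and b :: real
  assumes conc: "strictly_concave_on {0<..} u"
    and C1: "C1_on {0<..} u"
    and bpos: "b > 0"
    and fin: "finite (crossovers u b)"
begin

abbreviation "cs \<equiv> cpts u b"

lemma u_has_real_derivative: "x > 0 \<Longrightarrow> (u has_real_derivative deriv u x) (at x)"
  using C1 by (simp add: C1_on_def DERIV_deriv_iff_real_differentiable)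

lemma continuous_on_deriv_u: "continuous_on {0<..} (deriv u)"
  using C1 by (simp add: C1_on_def)

lemma deriv_u_strict_antimono: "strict_antimono_on {0<..} (deriv u)"
  using strictly_concave_on_deriv_strict_antimono[OF conc _ u_has_real_derivative] by simp

lemma cpts_nth_less_iff:
  assumes "i < length cs" "j < length cs"
  shows "cs ! i < cs ! j \<longleftrightarrow> i < j"
proof -
  have "sorted_wrt (<) cs" by (simp add: cpts_def)
  then show ?thesis
    using sorted_wrt_nth_less[of "(<)" cs i j] sorted_wrt_nth_less[of "(<)" cs j i] assms
    by (cases i j rule: linorder_cases) auto
qed

lemma cpts_nth_le_iff: "i < length cs \<Longrightarrow> j < length cs \<Longrightarrow> cs ! i \<le> cs ! j \<longleftrightarrow> i \<le> j"
  by (metis cpts_nth_less_iff not_less)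

lemma set_cpts: "set cs = crossovers u b"
  using fin by (simp add: cpts_def)

lemma cpts_nth_crossover: "i < length cs \<Longrightarrow> cs ! i \<in> crossovers u b"
  using set_cpts nth_mem by blast

lemma cpts_nth_pos: "i < length cs \<Longrightarrow> cs ! i > 0"
  using cpts_nth_crossover by (simp add: crossovers_def)

lemma crossover_eq_cpts_nth: "y \<in> crossovers u b \<Longrightarrow> \<exists>i < length cs. y = cs ! i"
  using set_cpts by (metis in_set_conv_nth)

lemma ival_eq:
  "{x. in_ival u b j x} = (if j < length cs then {ival_lo u b j<..<cs ! j} else {ival_lo u b j<..})"
  by (auto simp: in_ival_def)

lemma in_ival_pos: "j \<le> length cs \<Longrightarrow> in_ival u b j x \<Longrightarrow> x > 0"
  using cpts_nth_pos[of "j - 1"] by (force simp: in_ival_def ival_lo_def split: if_splits)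

lemma in_ival_not_crossover:
  assumes j: "j \<le> length cs" and z: "in_ival u b j z"
  shows "z \<notin> crossovers u b"
proof
  assume "z \<in> crossovers u b"
  then obtain i where i: "i < length cs" "z = cs ! i"
    using crossover_eq_cpts_nth by blast
  have "j \<le> i"
  proof (cases "j = 0")
    case False
    with z i j have "cs ! (j - 1) < cs ! i" "j - 1 < length cs"
      by (auto simp: in_ival_def ival_lo_def)
    with i cpts_nth_less_iff show ?thesis by auto
  qed simp
  moreover have "j < length cs \<Longrightarrow> i < j"
    using z i cpts_nth_less_iff[of i j] by (simp add: in_ival_def)
  ultimately show False
    using i j by (cases "j < length cs") auto
qed

lemma card_crossovers_le:
  assumes j: "j \<le> length cs" and lo: "0 < j \<Longrightarrow> cs ! (j - 1) \<le> x"
    and hi: "j < length cs \<Longrightarrow> x < cs ! j"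
  shows "card {y \<in> crossovers u b. y \<le> x} = j"
proof -
  have "{y \<in> crossovers u b. y \<le> x} = (\<lambda>i. cs ! i) ` {..<j}"
  proof (intro equalityI subsetI)
    fix y assume "y \<in> {y \<in> crossovers u b. y \<le> x}"
    then obtain i where i: "i < length cs" "y = cs ! i" "cs ! i \<le> x"
      using crossover_eq_cpts_nth by blast
    have "i < j"
    proof (rule ccontr)
      assume "\<not> i < j"
      with i j have "j < length cs" "cs ! j \<le> cs ! i" by (auto simp: cpts_nth_le_iff)
      with hi i show False by auto
    qed
    with i show "y \<in> (\<lambda>i. cs ! i) ` {..<j}" by auto
  next
    fix y assume "y \<in> (\<lambda>i. cs ! i) ` {..<j}"
    then obtain i where i: "i < j" "y = cs ! i" by auto
    with j lo have "cs ! i \<le> x"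
      using cpts_nth_le_iff[of i "j - 1"] by fastforce
    with i j cpts_nth_crossover show "y \<in> {y \<in> crossovers u b. y \<le> x}" by auto
  qed
  moreover have "inj_on (\<lambda>i. cs ! i) {..<j}"
    using j by (intro inj_on_nth) (auto simp: cpts_def)
  ultimately show ?thesis
    by (simp add: card_image)
qed

lemma modified_utility_eq_piece:
  assumes "j \<le> length cs" "0 < j \<Longrightarrow> cs ! (j - 1) \<le> x" "j < length cs \<Longrightarrow> x < cs ! j"
  shows "modified_utility u b x = base_fun u b j x + offset u b j"
  using card_crossovers_le[OF assms] by (simp add: modified_utility_def)

lemma exists_piece_index:
  obtains j where "j \<le> length cs" "0 < j \<Longrightarrow> cs ! (j - 1) \<le> x" "j < length cs \<Longrightarrow> x < cs ! j"
proof (cases "\<exists>i < length cs. x < cs ! i")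
  case True
  define j where "j = (LEAST i. i < length cs \<and> x < cs ! i)"
  have j: "j < length cs" "x < cs ! j"
    using LeastI_ex[OF True] unfolding j_def by auto
  have lo: "cs ! (j - 1) \<le> x" if "0 < j"
    using not_less_Least[of "j - 1" "\<lambda>i. i < length cs \<and> x < cs ! i"] that j
    unfolding j_def[symmetric] by force
  show ?thesis
    by (rule that[of j]) (use j lo in auto)
next
  case False
  then have "cs ! (length cs - 1) \<le> x" if "0 < length cs"
    using that by (meson diff_less not_less zero_less_one)
  then show ?thesis
    by (intro that[of "length cs"]) auto
qed

lemma first_type_iff:
  assumes j: "j \<le> length cs" and x: "in_ival u b j x"
  shows "first_type u b j \<longleftrightarrow> deriv u x \<le> b / x"
proof
  assume "first_type u b j"
  with x show "deriv u x \<le> b / x" by (simp add: first_type_def)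
next
  let ?g = "\<lambda>z. deriv u z - b / z" and ?I = "{z. in_ival u b j z}"
  assume "deriv u x \<le> b / x"
  have avoid: "?g z \<noteq> 0" if "z \<in> ?I" for z
    using in_ival_not_crossover[OF j] in_ival_pos[OF j] that by (auto simp: crossovers_def)
  have "convex ?I"
    by (simp add: ival_eq convex_real_interval)
  have "continuous_on ?I ?g"
    by (rule continuous_on_subset[of "{0<..}"])
      (use in_ival_pos[OF j] in \<open>auto intro!: continuous_intros continuous_on_deriv_u\<close>)
  have "x \<in> ?I" "?g x < 0"
    using \<open>deriv u x \<le> b / x\<close> avoid x by force+
  from continuous_on_convex_avoids_less[OF \<open>convex ?I\<close> \<open>continuous_on ?I ?g\<close> avoid this(1) _ this(2)]
  show "first_type u b j"
    by (force simp: first_type_def)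
qed

lemma base_fun_has_real_derivative_in_ival:
  assumes j: "j \<le> length cs" and x: "in_ival u b j x"
  shows "(base_fun u b j has_real_derivative modified_deriv u b x) (at x)"
proof -
  have "x > 0" using in_ival_pos[OF j x] .
  show ?thesis
  proof (cases "first_type u b j")
    case True
    then have "base_fun u b j = u" "modified_deriv u b x = deriv u x"
      using first_type_iff[OF j x] by (simp_all add: base_fun_def fun_eq_iff modified_deriv_def)
    with \<open>x > 0\<close> show ?thesis by (simp add: u_has_real_derivative)
  next
    case False
    then have "base_fun u b j = (\<lambda>x. b * ln x)" "modified_deriv u b x = b / x"
      using first_type_iff[OF j x] by (simp_all add: base_fun_def fun_eq_iff modified_deriv_def)
    with \<open>x > 0\<close> show ?thesis
      by (auto intro!: derivative_eq_intros)
  qed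
qed

lemma base_fun_has_real_derivative_at_crossover:
  assumes "x \<in> crossovers u b"
  shows "(base_fun u b j has_real_derivative modified_deriv u b x) (at x)"
proof -
  have "x > 0" "deriv u x = b / x"
    using assms by (auto simp: crossovers_def)
  then have "(u has_real_derivative b / x) (at x)" "((\<lambda>x. b * ln x) has_real_derivative b / x) (at x)"
    using u_has_real_derivative[of x] by (auto intro!: derivative_eq_intros)
  with \<open>deriv u x = b / x\<close> show ?thesis
    by (cases "first_type u b j") (simp_all add: base_fun_def[abs_def] modified_deriv_def)
qed

lemma modified_utility_has_real_derivative_in_ival:
  assumes j: "j \<le> length cs" and x: "in_ival u b j x"
  shows "(modified_utility u b has_real_derivative modified_deriv u b x) (at x)"
proof -
  have deriv: "((\<lambda>y. base_fun u b j y + offset u b j) has_real_derivative modified_deriv u b x) (at x)"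
    using DERIV_add[OF base_fun_has_real_derivative_in_ival[OF j x] DERIV_const] by simp
  have "open {y. in_ival u b j y}"
    by (simp add: ival_eq)
  moreover have "base_fun u b j y + offset u b j = modified_utility u b y" if "in_ival u b j y" for y
    using that j by (intro modified_utility_eq_piece[symmetric]) (auto simp: in_ival_def ival_lo_def)
  ultimately show ?thesis
    by (intro has_field_derivative_transform_within_open[OF deriv]) (use x in auto)
qed

lemma modified_utility_has_real_derivative_at_crossover:
  assumes i: "i < length cs"
  shows "(modified_utility u b has_real_derivative modified_deriv u b (cs ! i)) (at (cs ! i))"
proof -
  let ?x = "cs ! i"
  define A where "A = (\<lambda>y. base_fun u b i y + offset u b i)"
  define B where "B = (\<lambda>y. base_fun u b (Suc i) y + offset u b (Suc i))"
  define hi where "hi = (if Suc i < length cs then cs ! Suc i else ?x + 1)"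
  have "?x \<in> crossovers u b"
    using cpts_nth_crossover[OF i] .
  then have "(A has_real_derivative modified_deriv u b ?x) (at ?x)"
    "(B has_real_derivative modified_deriv u b ?x) (at ?x)"
    unfolding A_def B_def
    using DERIV_add[OF base_fun_has_real_derivative_at_crossover DERIV_const] by simp_all
  moreover have "A ?x = B ?x"
    by (simp add: A_def B_def)
  ultimately have glue:
      "((\<lambda>y. if y < ?x then A y else B y) has_real_derivative modified_deriv u b ?x) (at ?x)"
    by (rule has_real_derivative_glue)
  have "?x \<in> {ival_lo u b i<..<hi}"
    using i cpts_nth_pos[OF i] cpts_nth_less_iff[of "i - 1" i] cpts_nth_less_iff[of i "Suc i"]
    by (auto simp: ival_lo_def hi_def)
  moreover have "(if y < ?x then A y else B y) = modified_utility u b y"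
    if y: "y \<in> {ival_lo u b i<..<hi}" for y
  proof (cases "y < ?x")
    case True
    then have "modified_utility u b y = A y"
      unfolding A_def
      by (intro modified_utility_eq_piece) (use y i in \<open>auto simp: ival_lo_def split: if_splits\<close>)
    with True show ?thesis by simp
  next
    case False
    then have "modified_utility u b y = B y"
      unfolding B_def
      by (intro modified_utility_eq_piece) (use y i in \<open>auto simp: hi_def split: if_splits\<close>)
    with False show ?thesis by simp
  qed
  ultimately show ?thesis
    by (intro has_field_derivative_transform_within_open[OF glue, of "{ival_lo u b i<..<hi}"]) auto
qed

lemma modified_utility_has_real_derivative:
  assumes "x > 0"
  shows "(modified_utility u b has_real_derivative modified_deriv u b x) (at x)"
proof -
  obtain j where j: "j \<le> length cs" "0 < j \<Longrightarrow> cs ! (j - 1) \<le> x" "j < length cs \<Longrightarrow> x < cs ! j"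
    using exists_piece_index by blast
  show ?thesis
  proof (cases "j = 0 \<or> cs ! (j - 1) < x")
    case True
    with j assms have "in_ival u b j x"
      by (auto simp: in_ival_def ival_lo_def)
    with j(1) show ?thesis
      by (rule modified_utility_has_real_derivative_in_ival)
  next
    case False
    with j have "j - 1 < length cs" "x = cs ! (j - 1)"
      by auto
    then show ?thesis
      using modified_utility_has_real_derivative_at_crossover by simp
  qed
qed

lemma continuous_on_modified_deriv: "continuous_on {0<..} (modified_deriv u b)"
  unfolding modified_deriv_def[abs_def]
  by (intro continuous_intros continuous_on_deriv_u) auto

lemma modified_deriv_strict_antimono: "strict_antimono_on {0<..} (modified_deriv u b)"
proof (rule monotone_onI)
  fix x y :: real assume "x \<in> {0<..}" "y \<in> {0<..}" "x < y"
  then have "deriv u y < deriv u x" "b / y < b / x"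
    using monotone_onD[OF deriv_u_strict_antimono] bpos by (auto simp: divide_strict_left_mono)
  then show "modified_deriv u b y < modified_deriv u b x"
    by (auto simp: modified_deriv_def min_def)
qed

lemma C1_on_modified_utility: "C1_on {0<..} (modified_utility u b)"
  unfolding C1_on_def
proof
  show "\<forall>x\<in>{0<..}. modified_utility u b differentiable at x"
    using modified_utility_has_real_derivative real_differentiable_def by auto
  have "continuous_on {0<..} (deriv (modified_utility u b)) \<longleftrightarrow>
      continuous_on {0<..} (modified_deriv u b)"
    by (rule continuous_on_cong) (auto intro: DERIV_imp_deriv modified_utility_has_real_derivative)
  with continuous_on_modified_deriv show "continuous_on {0<..} (deriv (modified_utility u b))"
    by simp
qed

lemma strictly_concave_on_modified_utility: "strictly_concave_on {0<..} (modified_utility u b)"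
  using modified_utility_has_real_derivative modified_deriv_strict_antimono
  by (intro strictly_concave_onI_deriv) auto

lemma optimal_demand_cases:
  assumes "lam > 0"
  obtains (interior) m where "m > 0" "max 0 (min (deriv_inv u lam) (ereal (b / lam))) = ereal m"
      "modified_deriv u b m = lam"
    | (corner) "max 0 (min (deriv_inv u lam) (ereal (b / lam))) = 0"
      "\<And>x. x > 0 \<Longrightarrow> modified_deriv u b x < lam"
proof -
  have "b / lam > 0" "b / (b / lam) = lam"
    using bpos assms by auto
  show ?thesis
  proof (cases rule: deriv_inv_cases[OF continuous_on_deriv_u deriv_u_strict_antimono, of lam,
        case_names root below above])
    case (root x)
    define m where "m = min x (b / lam)"
    have "modified_deriv u b m = lam"
    proof (cases "x \<le> b / lam")
      case True
      with root assms have "lam \<le> b / x"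
        by (simp add: field_simps)
      with True root show ?thesis
        by (simp add: m_def modified_deriv_def)
    next
      case False
      with root \<open>b / lam > 0\<close> have "lam < deriv u (b / lam)"
        using monotone_onD[OF deriv_u_strict_antimono, of "b / lam" x] by auto
      with False \<open>b / (b / lam) = lam\<close> show ?thesis
        by (simp add: m_def modified_deriv_def)
    qed
    with root \<open>b / lam > 0\<close> show ?thesis
      by (intro interior[of m]) (auto simp: m_def min_def max_def)
  next
    case below
    with \<open>b / lam > 0\<close> show ?thesis
      by (intro corner) (auto simp: modified_deriv_def min_less_iff_disj)
  next
    case above
    then have "modified_deriv u b (b / lam) = lam"
      using \<open>b / lam > 0\<close> \<open>b / (b / lam) = lam\<close> by (simp add: modified_deriv_def)
    with above \<open>b / lam > 0\<close> show ?thesis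
      by (intro interior[of "b / lam"]) auto
  qed
qed

lemma modified_utility_argmax:
  assumes "lam > 0"
  shows "let t = max 0 (min (deriv_inv u lam) (ereal (b / lam)));
             f = (\<lambda>x. modified_utility u b x - lam * x)
         in (t > 0 \<longrightarrow> {x. 0 < x \<and> (\<forall>y>0. f y \<le> f x)} = {real_of_ereal t})
          \<and> (t = 0 \<longrightarrow> (\<forall>x y. 0 < x \<and> x < y \<longrightarrow> f y < f x))"
proof -
  define t where "t = max 0 (min (deriv_inv u lam) (ereal (b / lam)))"
  define f where "f = (\<lambda>x. modified_utility u b x - lam * x)"
  have D: "(f has_real_derivative modified_deriv u b x - lam) (at x)" if "x > 0" for x
    using DERIV_diff[OF modified_utility_has_real_derivative[OF that] DERIV_cmult_Id[of lam]] by (simp add: f_def)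
  have "(t > 0 \<longrightarrow> {x. 0 < x \<and> (\<forall>y>0. f y \<le> f x)} = {real_of_ereal t})
      \<and> (t = 0 \<longrightarrow> (\<forall>x y. 0 < x \<and> x < y \<longrightarrow> f y < f x))"
  proof (cases rule: optimal_demand_cases[OF assms, case_names interior corner])
    case (interior m)
    have "strict_antimono_on {0<..} (\<lambda>x. modified_deriv u b x - lam)"
      using modified_deriv_strict_antimono by (simp add: monotone_on_def)
    moreover have "m \<in> {0<..}" "modified_deriv u b m - lam = 0"
      using interior by auto
    ultimately have "{x \<in> {0<..}. \<forall>y\<in>{0<..}. f y \<le> f x} = {m}"
      using D by (intro argmax_at_critical_point[where f' = "\<lambda>x. modified_deriv u b x - lam"]) auto
    then have "{x. 0 < x \<and> (\<forall>y>0. f y \<le> f x)} = {m}"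
      by (simp add: Ball_def)
    with \<open>m > 0\<close> show ?thesis
      unfolding t_def interior(2) by simp
  next
    case corner
    have "f y < f x" if "0 < x" "x < y" for x y
    proof (rule DERIV_neg_imp_decreasing[OF \<open>x < y\<close>])
      fix z assume "x \<le> z" "z \<le> y"
      with \<open>0 < x\<close> have "z > 0" by simp
      with D corner(2) show "\<exists>d. (f has_real_derivative d) (at z) \<and> d < 0"
        by (intro exI[of _ "modified_deriv u b z - lam"]) simp
    qed
    then show ?thesis
      unfolding t_def corner(1) by simp
  qed
  then show ?thesis
    by (simp only: Let_def t_def f_def)
qed

end

theorem lemma2:
  fixes u :: "real \<Rightarrow> real" and b :: real
  assumes conc: "strictly_concave_on {0<..} u"
    and C1: "C1_on {0<..} u"
    and bpos: "b > 0"
    and fin: "finite (crossovers u b)"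
  shows "C1_on {0<..} (modified_utility u b)
         \<and> strictly_concave_on {0<..} (modified_utility u b)
         \<and> (\<forall>lam>0.
           (let t = max 0 (min (deriv_inv u lam) (ereal (b / lam)));
                f = (\<lambda>x. modified_utility u b x - lam * x)
            in (t > 0 \<longrightarrow> {x. 0 < x \<and> (\<forall>y>0. f y \<le> f x)} = {real_of_ereal t})
             \<and> (t = 0 \<longrightarrow> (\<forall>x y. 0 < x \<and> x < y \<longrightarrow> f y < f x))))"
  using C1_on_modified_utility[OF assms] strictly_concave_on_modified_utility[OF assms]
    modified_utility_argmax[OF assms] by blast

end
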